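(* Let $\rho>0$ and $\varepsilon\in(0,1]$. There exists a constant $c_6=c_6(\rho)>0$ such that if $v\in H^1(-\rho,\rho)$ and $$\int_{-\rho}^\rho|y^n|\,|v-\operatorname{sign}(y^n)|^2\,dy^n\le c_6,$$ then $$\int_{-\rho}^\rho e_{\varepsilon,\nu}(v)\,dy^n\ge c_0-Ce^{-c/\varepsilon},\qquad e_{\varepsilon,\nu}(v):=\frac\varepsilon2|\partial_{y^n}v|^2+\frac1\varepsilon F(v).$$ Moreover, there exists $c_7=c_7(\rho)>0$ such that if in addition $\int_{-\rho}^\rho e_{\varepsilon,\nu}(v)\,dy^n-c_0\le c_7$, then for every $\bar\rho\ge\rho$ such that $v$ is defined (and $H^1$) on $(-\bar\rho,\bar\rho)$, $$\int_{-\bar\rho}^{\bar\rho}\frac12\Big(\sqrt\varepsilon\,\partial_{y^n}v-\frac{f_1(v)}{\sqrt\varepsilon}\Big)^2dy^n\le C\Big(\int_{-\bar\rho}^{\bar\rho}e_{\varepsilon,\nu}(v)\,dy^n-c_0\Big)+Ce^{-c/\varepsilon}.$$ Here $C,c>0$ depend on $\rho$ and $F$ but not on $v$, $\varepsilon$ or $\bar\rho$.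
   Context: $F:\mathbb{R}\to\mathbb{R}$ is smooth with $F(x)>0$ for $|x|\ne1$ and $c(1-|x|)^2\le F(x)\le C(1-|x|)^2$ for $|x|\le2$; $f_1=\sqrt{2F}$ on $[-1,1]$ and $f_1=-\sqrt{2F}$ elsewhere; $c_0:=\int_{-1}^1f_1(s)\,ds$. $\operatorname{sign}(s)=\pm1$ for $\pm s>0$. *)

theory Defs
  imports "HOL-Analysis.Analysis"
begin

definition smooth_fun :: "(real \<Rightarrow> real) \<Rightarrow> bool" where
  "smooth_fun F \<longleftrightarrow> (\<forall>k. \<forall>x. ((deriv ^^ k) F) differentiable (at x))"

definition f1 :: "(real \<Rightarrow> real) \<Rightarrow> real \<Rightarrow> real" where
  "f1 F s = (if \<bar>s\<bar> \<le> 1 then sqrt (2 * F s) else - sqrt (2 * F s))"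

definition c0 :: "(real \<Rightarrow> real) \<Rightarrow> real" where
  "c0 F = (LBINT s=-1..1. f1 F s)"

text \<open>v belongs to H^1(a,b) with weak derivative v': v' is in L^1 and L^2 on [a,b]
  and v is the (absolutely continuous) primitive of v' there.\<close>
definition H1_on :: "real \<Rightarrow> real \<Rightarrow> (real \<Rightarrow> real) \<Rightarrow> (real \<Rightarrow> real) \<Rightarrow> bool" where
  "H1_on a b v v' \<longleftrightarrow>
     set_integrable lborel {a..b} v' \<and>
     set_integrable lborel {a..b} (\<lambda>x. (v' x)\<^sup>2) \<and>
     (\<forall>x\<in>{a..b}. v x = v a + (LBINT t=a..x. v' t))"

definition energy_density :: "(real \<Rightarrow> real) \<Rightarrow> real \<Rightarrow> (real \<Rightarrow> real) \<Rightarrow> (real \<Rightarrow> real) \<Rightarrow> real \<Rightarrow> real" where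
  "energy_density F \<epsilon> v v' y = \<epsilon> / 2 * (v' y)\<^sup>2 + F (v y) / \<epsilon>"

end

theory Submission
  imports Defs
begin

text \<open>Let G be a primitive of f1. By AM-GM the energy density dominates |f1(v) v'| = |(G \<circ> v)'|,
  so the energy of v on an interval bounds the oscillation of G \<circ> v there, and the deficit density
  1/2 (\<surd>\<epsilon> v' - f1(v)/\<surd>\<epsilon>)^2 equals e(v) - (G \<circ> v)'. If the weighted distance of v to sign y
  is small, v is close to -1 at some a \<in> [-3\<rho>/4, -\<rho>/2] and close to 1 at some b \<in> [\<rho>/2, 3\<rho>/4],
  so the energy on [a, b] is at least c0 = G(1) - G(-1) minus the small gaps G(v a) - G(-1) and
  G(1) - G(v b). Beyond b (and symmetrically before a), cut \<rho>/4 into blocks of length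
  proportional to \<epsilon>. If v leaves the well region [0, 2] the energy exceeds c0 by a fixed amount;
  otherwise on every block either the gap drops by a third or the potential term alone pays half
  of it, so after the N \<sim> \<rho>/\<epsilon> blocks the unpaid part of the gap is O((2/3)^N) = O(e^{-c/\<epsilon>}).
  The same bookkeeping bounds the deficit on any larger interval.\<close>

lemma mvt_along_continuous:
  fixes G g u :: "real \<Rightarrow> real"
  assumes pq: "p \<le> q" and u: "continuous_on {p..q} u"
    and G: "\<And>s. (G has_real_derivative g s) (at s)"
  shows "\<exists>s\<in>{p..q}. G (u q) - G (u p) = g (u s) * (u q - u p)"
proof -
  consider "u p = u q" | "u p < u q" | "u q < u p" by linarith
  then show ?thesis
  proof cases
    case 1
    then show ?thesis using pq by (intro bexI[of _ p]) auto
  next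
    case 2
    obtain z where z: "u p < z" "z < u q" "G (u q) - G (u p) = (u q - u p) * g z"
      using MVT2[OF 2, of G g] G by blast
    obtain s where "p \<le> s" "s \<le> q" "u s = z"
      using IVT'[of u p z q] z u pq by auto
    with z show ?thesis by (intro bexI[of _ s]) auto
  next
    case 3
    obtain z where z: "u q < z" "z < u p" "G (u p) - G (u q) = (u p - u q) * g z"
      using MVT2[OF 3, of G g] G by blast
    obtain s where "p \<le> s" "s \<le> q" "u s = z"
      using IVT2'[of u q z p] z u pq by auto
    with z show ?thesis by (intro bexI[of _ s]) (auto simp: algebra_simps)
  qed
qed

lemma local_bound_imp_global:
  fixes \<phi> \<psi> :: "real \<Rightarrow> real"
  assumes ab: "a \<le> b" and d: "d > 0"
    and local: "\<And>p q. a \<le> p \<Longrightarrow> p \<le> q \<Longrightarrow> q \<le> b \<Longrightarrow> q - p < d \<Longrightarrow> \<bar>\<phi> q - \<phi> p\<bar> \<le> \<psi> q - \<psi> p"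
  shows "\<bar>\<phi> b - \<phi> a\<bar> \<le> \<psi> b - \<psi> a"
proof -
  obtain N :: nat where N: "(b - a) / d < real N" using reals_Archimedean2 by blast
  have "0 \<le> (b - a) / d" using ab d by simp
  with N have N0: "real N > 0" by linarith
  define h where "h = (b - a) / N"
  have "b - a < real N * d" using N d by (simp add: divide_less_eq)
  then have h: "0 \<le> h" "h < d" "a + real N * h = b"
    using ab N0 by (simp_all add: h_def divide_less_eq mult.commute)
  have "\<bar>\<phi> (a + real i * h) - \<phi> a\<bar> \<le> \<psi> (a + real i * h) - \<psi> a" if "i \<le> N" for i
    using that
  proof (induction i)
    case (Suc i)
    let ?p = "a + real i * h" and ?q = "a + real (Suc i) * h"
    have "real (Suc i) * h \<le> real N * h" using Suc.prems h by (intro mult_right_mono) auto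
    then have "\<bar>\<phi> ?q - \<phi> ?p\<bar> \<le> \<psi> ?q - \<psi> ?p"
      using h by (intro local) (auto simp: algebra_simps)
    then show ?case using Suc by simp
  qed simp
  from this[of N] show ?thesis using h by simp
qed

lemma chain_rule_error_le:
  fixes u w g G :: "real \<Rightarrow> real"
  assumes pq: "p \<le> q"
    and w: "w integrable_on {p..q}" and abs_w: "(\<lambda>t. \<bar>w t\<bar>) integrable_on {p..q}"
    and gw: "(\<lambda>t. g (u t) * w t) integrable_on {p..q}"
    and u: "continuous_on {p..q} u" "u q - u p = integral {p..q} w"
    and G: "\<And>s. (G has_real_derivative g s) (at s)"
    and osc: "\<And>s r. s \<in> {p..q} \<Longrightarrow> r \<in> {p..q} \<Longrightarrow> \<bar>g (u s) - g (u r)\<bar> \<le> \<eta>"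
  shows "\<bar>G (u q) - G (u p) - integral {p..q} (\<lambda>t. g (u t) * w t)\<bar> \<le> \<eta> * integral {p..q} (\<lambda>t. \<bar>w t\<bar>)"
proof -
  obtain s where s: "s \<in> {p..q}" "G (u q) - G (u p) = g (u s) * (u q - u p)"
    using mvt_along_continuous[OF pq u(1) G] by blast
  have sw: "(\<lambda>r. g (u s) * w r) integrable_on {p..q}"
    using integrable_on_cmult_left[OF w, of "g (u s)"] by simp
  have "G (u q) - G (u p) - integral {p..q} (\<lambda>t. g (u t) * w t)
      = integral {p..q} (\<lambda>r. g (u s) * w r) - integral {p..q} (\<lambda>t. g (u t) * w t)"
    using s(2) u(2) by simp
  also have "\<dots> = integral {p..q} (\<lambda>r. (g (u s) - g (u r)) * w r)"
    using sw gw by (subst Henstock_Kurzweil_Integration.integral_diff[symmetric]) (auto simp: algebra_simps)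
  also have "norm \<dots> \<le> integral {p..q} (\<lambda>r. \<eta> * \<bar>w r\<bar>)"
  proof (rule integral_norm_bound_integral)
    show "(\<lambda>r. (g (u s) - g (u r)) * w r) integrable_on {p..q}"
      using integrable_diff[OF sw gw] by (simp add: left_diff_distrib)
    show "(\<lambda>r. \<eta> * \<bar>w r\<bar>) integrable_on {p..q}"
      using integrable_on_cmult_left[OF abs_w] by simp
    show "norm ((g (u s) - g (u r)) * w r) \<le> \<eta> * \<bar>w r\<bar>" if "r \<in> {p..q}" for r
      using osc[OF s(1) that] by (simp add: abs_mult mult_right_mono)
  qed
  finally show ?thesis by simp
qed

text \<open>Since u is merely an indefinite integral, G \<circ> u need not be differentiable; the chain rule
  is instead obtained from the mean value theorem on short intervals, on which g \<circ> u oscillates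
  little by uniform continuity.\<close>

lemma chain_rule_error_uniform:
  fixes u w g G :: "real \<Rightarrow> real"
  assumes ab: "a \<le> b"
    and w: "w integrable_on {a..b}" and abs_w: "(\<lambda>t. \<bar>w t\<bar>) integrable_on {a..b}"
    and gw: "(\<lambda>t. g (u t) * w t) integrable_on {a..b}"
    and u: "\<And>t. t \<in> {a..b} \<Longrightarrow> u t = u a + integral {a..t} w"
    and g: "continuous_on UNIV g"
    and G: "\<And>s. (G has_real_derivative g s) (at s)"
    and "\<eta> > 0"
  shows "\<bar>G (u b) - G (u a) - integral {a..b} (\<lambda>t. g (u t) * w t)\<bar> \<le> \<eta> * integral {a..b} (\<lambda>t. \<bar>w t\<bar>)"
proof -
  let ?h = "\<lambda>t. g (u t) * w t"
  have sub: "f integrable_on {a..b} \<Longrightarrow> a \<le> p \<Longrightarrow> q \<le> b \<Longrightarrow> f integrable_on {p..q}"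
    for f :: "real \<Rightarrow> real" and p q
    by (rule integrable_on_subinterval) auto
  have combine: "f integrable_on {a..b} \<Longrightarrow> a \<le> p \<Longrightarrow> p \<le> q \<Longrightarrow> q \<le> b \<Longrightarrow>
      integral {a..q} f - integral {a..p} f = integral {p..q} f" for f :: "real \<Rightarrow> real" and p q
    using Henstock_Kurzweil_Integration.integral_combine[of a p q f] sub[of f a q] by simp
  have "continuous_on {a..b} (\<lambda>t. u a + integral {a..t} w)"
    by (intro continuous_intros indefinite_integral_continuous_1[OF w])
  then have u_cont: "continuous_on {a..b} u"
    by (rule continuous_on_eq) (simp add: u[symmetric])
  then have "uniformly_continuous_on {a..b} (g \<circ> u)"
    by (intro compact_uniformly_continuous continuous_on_compose continuous_on_subset[OF g]) auto
  then obtain d where d: "d > 0"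
    "\<And>s r. s \<in> {a..b} \<Longrightarrow> r \<in> {a..b} \<Longrightarrow> dist r s < d \<Longrightarrow> dist (g (u r)) (g (u s)) < \<eta>"
    using \<open>\<eta> > 0\<close> unfolding uniformly_continuous_on_def comp_def by metis
  define \<Phi> where "\<Phi> t = G (u t) - integral {a..t} ?h" for t
  have local: "\<bar>\<Phi> q - \<Phi> p\<bar> \<le> \<eta> * integral {a..q} (\<lambda>t. \<bar>w t\<bar>) - \<eta> * integral {a..p} (\<lambda>t. \<bar>w t\<bar>)"
    if pq: "a \<le> p" "p \<le> q" "q \<le> b" "q - p < d" for p q
  proof -
    have "\<bar>G (u q) - G (u p) - integral {p..q} ?h\<bar> \<le> \<eta> * integral {p..q} (\<lambda>t. \<bar>w t\<bar>)"
    proof (rule chain_rule_error_le[OF pq(2) sub[OF w] sub[OF abs_w] sub[OF gw] _ _ G])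
      show "continuous_on {p..q} u" by (rule continuous_on_subset[OF u_cont]) (use pq in auto)
      show "u q - u p = integral {p..q} w" using u[of p] u[of q] combine[OF w, of p q] pq by simp
      show "\<bar>g (u s) - g (u r)\<bar> \<le> \<eta>" if "s \<in> {p..q}" "r \<in> {p..q}" for s r
        using d(2)[of s r] that pq by (fastforce simp: dist_real_def abs_minus_commute)
    qed (use pq in auto)
    then show ?thesis
      using combine[OF gw, of p q] combine[OF abs_w, of p q] pq
      by (simp add: \<Phi>_def right_diff_distrib[symmetric] algebra_simps)
  qed
  have "\<bar>\<Phi> b - \<Phi> a\<bar> \<le> \<eta> * integral {a..b} (\<lambda>t. \<bar>w t\<bar>) - \<eta> * integral {a..a} (\<lambda>t. \<bar>w t\<bar>)"
    by (rule local_bound_imp_global[OF ab d(1) local])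
  then show ?thesis by (simp add: \<Phi>_def)
qed

lemma integral_chain_rule:
  fixes u w g G :: "real \<Rightarrow> real"
  assumes ab: "a \<le> b"
    and w: "w integrable_on {a..b}" and abs_w: "(\<lambda>t. \<bar>w t\<bar>) integrable_on {a..b}"
    and gw: "(\<lambda>t. g (u t) * w t) integrable_on {a..b}"
    and u: "\<And>t. t \<in> {a..b} \<Longrightarrow> u t = u a + integral {a..t} w"
    and g: "continuous_on UNIV g"
    and G: "\<And>s. (G has_real_derivative g s) (at s)"
  shows "G (u b) - G (u a) = integral {a..b} (\<lambda>t. g (u t) * w t)"
proof -
  define I where "I = integral {a..b} (\<lambda>t. \<bar>w t\<bar>)"
  have "I \<ge> 0" unfolding I_def using abs_w by (intro integral_nonneg) auto
  have "\<bar>G (u b) - G (u a) - integral {a..b} (\<lambda>t. g (u t) * w t)\<bar> \<le> 0"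
  proof (rule field_le_epsilon)
    fix e :: real assume "e > 0"
    then have "\<bar>G (u b) - G (u a) - integral {a..b} (\<lambda>t. g (u t) * w t)\<bar> \<le> e / (I + 1) * I"
      using chain_rule_error_uniform[OF assms, of "e / (I + 1)"] \<open>I \<ge> 0\<close> by (simp add: I_def)
    also have "\<dots> \<le> e" using \<open>e > 0\<close> \<open>I \<ge> 0\<close> by (simp add: field_simps)
    finally show "\<bar>G (u b) - G (u a) - integral {a..b} (\<lambda>t. g (u t) * w t)\<bar> \<le> 0 + e" by simp
  qed
  then show ?thesis by simp
qed

lemma decay_recurrence:
  fixes H E :: "nat \<Rightarrow> real"
  assumes drop: "\<And>j. j < m \<Longrightarrow> H j - H (Suc j) \<le> E j"
    and half: "\<And>j. j < m \<Longrightarrow> H (Suc j) / 2 \<le> E j"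
  shows "(1 - 5/4 * (2/3)^m) * H 0 + H m / 4 \<le> (\<Sum>j<m. E j)"
  using assms
proof (induction m arbitrary: H E)
  case (Suc m)
  have IH: "(1 - 5/4 * (2/3)^m) * H 1 + H (Suc m) / 4 \<le> (\<Sum>j<m. E (Suc j))"
    using Suc.IH[of "\<lambda>j. H (Suc j)" "\<lambda>j. E (Suc j)"] Suc.prems by auto
  define T where "T = 5/4 * (2/3::real)^m"
  have T: "0 \<le> T" "T \<le> 5/4" unfolding T_def by (auto simp: power_le_one)
  \<comment> \<open>Either H drops by a third on the first block, or the block costs at least H 1 / 2 \<ge> H 0 / 3.\<close>
  have "(1 - 2/3 * T) * H 0 \<le> E 0 + (1 - T) * H 1"
  proof (cases "H 1 \<le> 2/3 * H 0")
    case True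
    then have "T * H 1 \<le> T * (2/3 * H 0)" using T by (intro mult_left_mono) auto
    with Suc.prems(1)[of 0] show ?thesis by (simp add: algebra_simps)
  next
    case False
    then have "(3/2 - T) * (2/3 * H 0) \<le> (3/2 - T) * H 1" using T by (intro mult_left_mono) auto
    moreover have "(3/2 - T) * (2/3 * H 0) = (1 - 2/3 * T) * H 0" "(3/2 - T) * H 1 = H 1 / 2 + (1 - T) * H 1"
      by (simp_all add: field_simps)
    moreover have "H 1 / 2 \<le> E 0" using Suc.prems(2)[of 0] by simp
    ultimately show ?thesis by linarith
  qed
  moreover have "5/4 * (2/3::real)^Suc m = 2/3 * T" by (simp add: T_def)
  moreover have "(\<Sum>j<Suc m. E j) = E 0 + (\<Sum>j<m. E (Suc j))"
    by (rule sum.lessThan_Suc_shift)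
  ultimately show ?case using IH unfolding T_def[symmetric] by simp
qed simp

lemma exists_below_if_integral_small:
  fixes f :: "real \<Rightarrow> real"
  assumes "x \<le> y" "f integrable_on {x..y}" "integral {x..y} f < (y - x) * m"
  shows "\<exists>t\<in>{x..y}. f t < m"
proof (rule ccontr)
  assume "\<not> (\<exists>t\<in>{x..y}. f t < m)"
  then have "integral {x..y} (\<lambda>t. m) \<le> integral {x..y} f"
    using assms by (intro integral_le) (auto simp: not_less)
  with assms show False by simp
qed

lemma weighted_distance_set_integrable:
  fixes v :: "real \<Rightarrow> real"
  assumes v: "continuous_on {-\<rho>..\<rho>} v"
  shows "set_integrable lborel {-\<rho>..\<rho>} (\<lambda>y. \<bar>y\<bar> * (v y - sgn y)\<^sup>2)"
proof (rule set_integrable_bound)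
  show "set_integrable lborel {-\<rho>..\<rho>} (\<lambda>y. \<bar>y\<bar> * (\<bar>v y\<bar> + 1)\<^sup>2)"
    by (intro borel_integrable_atLeastAtMost' continuous_intros v)
  have "(\<lambda>x. indicator {-\<rho>..\<rho>} x *\<^sub>R v x) \<in> borel_measurable borel"
    by (rule borel_measurable_continuous_on_indicator[OF _ v]) auto
  then have "(\<lambda>x. indicator {-\<rho>..\<rho>} x *\<^sub>R (\<bar>x\<bar> * ((indicator {-\<rho>..\<rho>} x *\<^sub>R v x) - sgn x)\<^sup>2)) \<in> borel_measurable borel"
    by measurable
  moreover have "(\<lambda>x. indicator {-\<rho>..\<rho>} x *\<^sub>R (\<bar>x\<bar> * ((indicator {-\<rho>..\<rho>} x *\<^sub>R v x) - sgn x)\<^sup>2))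
     = (\<lambda>x. indicator {-\<rho>..\<rho>} x *\<^sub>R (\<bar>x\<bar> * (v x - sgn x)\<^sup>2))"
    by (auto simp: fun_eq_iff indicator_def)
  ultimately show "set_borel_measurable lborel {-\<rho>..\<rho>} (\<lambda>y. \<bar>y\<bar> * (v y - sgn y)\<^sup>2)"
    unfolding set_borel_measurable_def by simp
  show "AE x in lborel. x \<in> {-\<rho>..\<rho>} \<longrightarrow> norm (\<bar>x\<bar> * (v x - sgn x)\<^sup>2) \<le> norm (\<bar>x\<bar> * (\<bar>v x\<bar> + 1)\<^sup>2)"
  proof (intro AE_I2 impI)
    fix x :: real
    have "\<bar>v x - sgn x\<bar> \<le> \<bar>v x\<bar> + 1"
      by (cases "x > 0"; cases "x < 0") auto
    then have "(v x - sgn x)\<^sup>2 \<le> (\<bar>v x\<bar> + 1)\<^sup>2"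
      using abs_le_square_iff[of "v x - sgn x" "\<bar>v x\<bar> + 1"] by simp
    then show "norm (\<bar>x\<bar> * (v x - sgn x)\<^sup>2) \<le> norm (\<bar>x\<bar> * (\<bar>v x\<bar> + 1)\<^sup>2)"
      by (simp add: mult_left_mono)
  qed
qed

lemma exists_weighted_distance_small:
  fixes v :: "real \<Rightarrow> real"
  assumes v: "continuous_on {-\<rho>..\<rho>} v" and "\<rho> > 0"
    and small: "(LBINT y=-\<rho>..\<rho>. \<bar>y\<bar> * (v y - sgn y)\<^sup>2) < \<rho>\<^sup>2 * \<delta> / 8"
    and xy: "-\<rho> \<le> x" "y \<le> \<rho>" "y - x = \<rho> / 4"
  shows "\<exists>t\<in>{x..y}. \<bar>t\<bar> * (v t - sgn t)\<^sup>2 < \<rho> / 2 * \<delta>"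
proof (rule exists_below_if_integral_small)
  define g where "g y = \<bar>y\<bar> * (v y - sgn y)\<^sup>2" for y
  have g: "set_integrable lborel {-\<rho>..\<rho>} g"
    unfolding g_def by (rule weighted_distance_set_integrable[OF v])
  have "(LBINT y=-\<rho>..\<rho>. g y) = integral {-\<rho>..\<rho>} g"
    using \<open>\<rho> > 0\<close> g by (intro interval_integral_eq_integral) auto
  then have total: "integral {-\<rho>..\<rho>} g < \<rho>\<^sup>2 * \<delta> / 8" using small by (simp add: g_def)
  have gi: "g integrable_on {-\<rho>..\<rho>}" using set_borel_integral_eq_integral(1)[OF g] .
  then show i: "g integrable_on {x..y}" by (rule integrable_on_subinterval) (use xy in auto)
  have "integral {x..y} g \<le> integral {-\<rho>..\<rho>} g"
    using xy i gi by (intro integral_subset_le) (auto simp: g_def)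
  moreover have "(y - x) * (\<rho> / 2 * \<delta>) = \<rho>\<^sup>2 * \<delta> / 8"
    using xy by (simp add: power2_eq_square)
  ultimately show "integral {x..y} g < (y - x) * (\<rho> / 2 * \<delta>)"
    using total by linarith
qed (use xy \<open>\<rho> > 0\<close> in auto)

lemma near_signs_if_weighted_distance_small:
  fixes v :: "real \<Rightarrow> real"
  assumes v: "continuous_on {-\<rho>..\<rho>} v" and "\<rho> > 0"
    and small: "(LBINT y=-\<rho>..\<rho>. \<bar>y\<bar> * (v y - sgn y)\<^sup>2) < \<rho>\<^sup>2 * \<delta> / 8"
  shows "\<exists>a\<in>{-3*\<rho>/4..-\<rho>/2}. (v a + 1)\<^sup>2 < \<delta>" and "\<exists>b\<in>{\<rho>/2..3*\<rho>/4}. (v b - 1)\<^sup>2 < \<delta>"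
proof -
  obtain a where a: "a \<in> {-3*\<rho>/4..-\<rho>/2}" "\<bar>a\<bar> * (v a - sgn a)\<^sup>2 < \<rho> / 2 * \<delta>"
    using exists_weighted_distance_small[OF v \<open>\<rho> > 0\<close> small, of "-3*\<rho>/4" "-\<rho>/2"] \<open>\<rho> > 0\<close> by auto
  moreover have "sgn a = -1" "\<rho> / 2 \<le> \<bar>a\<bar>" using a(1) \<open>\<rho> > 0\<close> by auto
  then have "\<rho> / 2 * (v a + 1)\<^sup>2 \<le> \<bar>a\<bar> * (v a - sgn a)\<^sup>2"
    using mult_right_mono[of "\<rho> / 2" "\<bar>a\<bar>" "(v a + 1)\<^sup>2"] by simp
  ultimately have "\<rho> / 2 * (v a + 1)\<^sup>2 < \<rho> / 2 * \<delta>" by linarith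
  then show "\<exists>a\<in>{-3*\<rho>/4..-\<rho>/2}. (v a + 1)\<^sup>2 < \<delta>"
    using a(1) \<open>\<rho> > 0\<close> by (auto simp: mult_less_cancel_left_pos)
  obtain b where b: "b \<in> {\<rho>/2..3*\<rho>/4}" "\<bar>b\<bar> * (v b - sgn b)\<^sup>2 < \<rho> / 2 * \<delta>"
    using exists_weighted_distance_small[OF v \<open>\<rho> > 0\<close> small, of "\<rho>/2" "3*\<rho>/4"] \<open>\<rho> > 0\<close> by auto
  moreover have "sgn b = 1" "\<rho> / 2 \<le> \<bar>b\<bar>" using b(1) \<open>\<rho> > 0\<close> by auto
  then have "\<rho> / 2 * (v b - 1)\<^sup>2 \<le> \<bar>b\<bar> * (v b - sgn b)\<^sup>2"
    using mult_right_mono[of "\<rho> / 2" "\<bar>b\<bar>" "(v b - 1)\<^sup>2"] by simp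
  ultimately have "\<rho> / 2 * (v b - 1)\<^sup>2 < \<rho> / 2 * \<delta>" by linarith
  then show "\<exists>b\<in>{\<rho>/2..3*\<rho>/4}. (v b - 1)\<^sup>2 < \<delta>"
    using b(1) \<open>\<rho> > 0\<close> by (auto simp: mult_less_cancel_left_pos)
qed

lemma exists_steps_two_thirds_pow_le_exp:
  assumes "X \<ge> 0"
  shows "\<exists>N::nat. real N \<le> X \<and> (2/3::real)^N \<le> 3/2 * exp (- ln (3/2) * X)"
proof -
  define N where "N = nat \<lfloor>X\<rfloor>"
  have N: "real N \<le> X" "X - 1 \<le> real N" using assms by (auto simp: N_def)
  have "ln (2/3::real) = - ln (3/2)" by (simp add: ln_div)
  then have "(2/3::real)^N = exp (- ln (3/2) * real N)"
    by (metis exp_ln exp_of_nat_mult mult.commute zero_less_divide_iff zero_less_numeral)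
  also have "\<dots> \<le> exp (- ln (3/2) * (X - 1))"
    using N by (intro exp_le_cancel_iff[THEN iffD2] mult_left_mono_neg) auto
  also have "- ln (3/2) * (X - 1) = ln (3/2) + - ln (3/2) * X"
    by (simp add: algebra_simps)
  also have "exp (ln (3/2) + - ln (3/2) * X) = 3/2 * exp (- ln (3/2) * X)"
    by (simp only: exp_add) simp
  finally show ?thesis using N by blast
qed

lemma primitive_ge_quadratic:
  fixes P f :: "real \<Rightarrow> real"
  assumes P: "\<And>x. (P has_real_derivative f x) (at x)"
    and sign: "\<And>x. x \<in> {min c s..max c s} \<Longrightarrow> 0 \<le> (f x - 2 * k * (x - c)) * (x - c)"
  shows "k * (s - c)\<^sup>2 \<le> P s - P c"
proof -
  define D where "D x = P x - P c - k * (x - c)\<^sup>2" for x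
  have D: "(D has_real_derivative f x - 2 * k * (x - c)) (at x)" for x
    unfolding D_def by (auto intro!: derivative_eq_intros P)
  \<comment> \<open>By the sign condition, D decreases towards c from both sides, and D c = 0.\<close>
  have "D c = 0" by (simp add: D_def)
  consider "s = c" | "c < s" | "s < c" by linarith
  then have "0 \<le> D s"
  proof cases
    case 2
    obtain z where z: "c < z" "z < s" "D s - D c = (s - c) * (f z - 2 * k * (z - c))"
      using MVT2[OF 2 D] by blast
    have "0 \<le> (f z - 2 * k * (z - c)) * (z - c)" using z 2 by (intro sign) auto
    then have "0 \<le> f z - 2 * k * (z - c)" using z by (simp add: zero_le_mult_iff)
    then show ?thesis using z 2 \<open>D c = 0\<close> by simp
  next
    case 3
    obtain z where z: "s < z" "z < c" "D c - D s = (c - s) * (f z - 2 * k * (z - c))"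
      using MVT2[OF 3 D] by blast
    have "0 \<le> (f z - 2 * k * (z - c)) * (z - c)" using z 3 by (intro sign) auto
    then have "f z - 2 * k * (z - c) \<le> 0" using z by (simp add: zero_le_mult_iff)
    then have "(c - s) * (f z - 2 * k * (z - c)) \<le> 0" using 3 by (intro mult_nonneg_nonpos) auto
    then show ?thesis using z \<open>D c = 0\<close> by linarith
  qed (use \<open>D c = 0\<close> in simp)
  then show ?thesis by (simp add: D_def)
qed

locale double_well =
  fixes F :: "real \<Rightarrow> real" and cF CF :: real
  assumes F_cont: "continuous_on UNIV F"
    and F_pos: "\<And>x. \<bar>x\<bar> \<noteq> 1 \<Longrightarrow> F x > 0"
    and cF: "cF > 0"
    and F_quadratic: "\<And>x. \<bar>x\<bar> \<le> 2 \<Longrightarrow> cF * (1 - \<bar>x\<bar>)\<^sup>2 \<le> F x \<and> F x \<le> CF * (1 - \<bar>x\<bar>)\<^sup>2"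
begin

lemma F_nonneg: "F x \<ge> 0"
  using F_pos[of x] F_quadratic[of x] cF by (cases "\<bar>x\<bar> = 1") auto

lemma F_wells: "\<bar>x\<bar> = 1 \<Longrightarrow> F x = 0"
  using F_quadratic[of x] F_nonneg[of x] by auto

lemma cF_le_CF: "cF \<le> CF"
  using F_quadratic[of 0] by simp

lemma f1_abs: "\<bar>f1 F s\<bar> = sqrt (2 * F s)"
  using F_nonneg[of s] by (simp add: f1_def)

lemma f1_sq: "(f1 F s)\<^sup>2 = 2 * F s"
  using F_nonneg[of s] by (simp add: f1_def)

lemma f1_cont: "continuous_on UNIV (f1 F)"
proof -
  have c: "continuous_on S (\<lambda>x. sqrt (2 * F x))" for S
    by (intro continuous_intros continuous_on_subset[OF F_cont]) auto
  have "continuous_on ({x. \<bar>x\<bar> \<le> 1} \<union> {x. 1 \<le> \<bar>x\<bar>})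
     (\<lambda>x. if \<bar>x\<bar> \<le> 1 then sqrt (2 * F x) else - sqrt (2 * F x))"
    by (intro continuous_on_cases closed_Collect_le continuous_intros c) (auto simp: F_wells)
  moreover have "{x. \<bar>x\<bar> \<le> 1} \<union> {x. 1 \<le> \<bar>x\<bar>} = (UNIV::real set)" by auto
  ultimately show ?thesis unfolding f1_def[abs_def] by simp
qed

text \<open>c0 = G 1 - G (-1) is the least energy of a transition between the wells; Hplus s and Hminus s
  are the least energies needed to connect the value s to the wells 1 and -1.\<close>

definition G :: "real \<Rightarrow> real" where "G s = (LBINT x=0..s. f1 F x)"
definition Hplus :: "real \<Rightarrow> real" where "Hplus s = G 1 - G s"
definition Hminus :: "real \<Rightarrow> real" where "Hminus s = G s - G (-1)"

lemma G_deriv: "(G has_real_derivative f1 F s) (at s)"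
proof -
  let ?a = "- \<bar>s\<bar> - 1" and ?b = "\<bar>s\<bar> + 1"
  have "(G has_vector_derivative (f1 F s)) (at s within {?a..?b})"
    unfolding G_def[abs_def]
    using interval_integral_FTC2[of ?a 0 ?b "f1 F" s] continuous_on_subset[OF f1_cont]
    by (auto simp: zero_ereal_def)
  moreover have "s \<in> interior {?a..?b}" by auto
  ultimately show ?thesis
    by (metis at_within_interior has_real_derivative_iff_has_vector_derivative)
qed

lemma c0_eq_G: "c0 F = G 1 - G (-1)"
proof -
  have "(LBINT x=ereal (-1)..ereal 1. f1 F x) = G 1 - G (-1)"
    using continuous_on_subset[OF f1_cont] has_field_derivative_at_within[OF G_deriv]
    by (intro interval_integral_FTC_finite) (auto simp: has_real_derivative_iff_has_vector_derivative)
  then show ?thesis unfolding c0_def by (simp add: one_ereal_def)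
qed

definition kL :: real where "kL = sqrt (2 * cF) / 2"
definition kU :: real where "kU = sqrt (2 * CF) / 2"

lemma kL_pos: "kL > 0" using cF by (simp add: kL_def)
lemma kL_le_kU: "kL \<le> kU" using cF_le_CF by (simp add: kL_def kU_def)
lemma kU_pos: "kU > 0" using kL_pos kL_le_kU by linarith

lemma f1_times_distance:
  assumes "\<bar>x\<bar> \<le> 2"
  shows "2 * kL * (1 - \<bar>x\<bar>)\<^sup>2 \<le> f1 F x * (1 - \<bar>x\<bar>) \<and> f1 F x * (1 - \<bar>x\<bar>) \<le> 2 * kU * (1 - \<bar>x\<bar>)\<^sup>2"
proof -
  have "sqrt (2 * (cF * (1 - \<bar>x\<bar>)\<^sup>2)) \<le> \<bar>f1 F x\<bar>" "\<bar>f1 F x\<bar> \<le> sqrt (2 * (CF * (1 - \<bar>x\<bar>)\<^sup>2))"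
    using F_quadratic[OF assms] by (simp_all add: f1_abs)
  then have "2 * kL * \<bar>1 - \<bar>x\<bar>\<bar> \<le> \<bar>f1 F x\<bar>" "\<bar>f1 F x\<bar> \<le> 2 * kU * \<bar>1 - \<bar>x\<bar>\<bar>"
    by (simp_all add: kL_def kU_def real_sqrt_mult)
  then have "2 * kL * \<bar>1 - \<bar>x\<bar>\<bar> * \<bar>1 - \<bar>x\<bar>\<bar> \<le> \<bar>f1 F x\<bar> * \<bar>1 - \<bar>x\<bar>\<bar>"
    "\<bar>f1 F x\<bar> * \<bar>1 - \<bar>x\<bar>\<bar> \<le> 2 * kU * \<bar>1 - \<bar>x\<bar>\<bar> * \<bar>1 - \<bar>x\<bar>\<bar>"
    by (simp_all add: mult_right_mono)
  \<comment> \<open>f1 has the sign of 1 - |x|, so the product is the product of absolute values.\<close>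
  moreover have "f1 F x * (1 - \<bar>x\<bar>) = \<bar>f1 F x\<bar> * \<bar>1 - \<bar>x\<bar>\<bar>"
    using F_nonneg[of x] by (auto simp: f1_def abs_mult algebra_simps)
  ultimately show ?thesis
    by (simp add: power2_eq_square mult.assoc)
qed

lemma Hplus_bounds:
  assumes "0 \<le> s" "s \<le> 2"
  shows "kL * (1 - s)\<^sup>2 \<le> Hplus s \<and> Hplus s \<le> kU * (1 - s)\<^sup>2"
proof -
  have dist: "2 * kL * (1 - x)\<^sup>2 \<le> f1 F x * (1 - x) \<and> f1 F x * (1 - x) \<le> 2 * kU * (1 - x)\<^sup>2"
    if "x \<in> {min 1 s..max 1 s}" for x
    using f1_times_distance[of x] that assms by auto
  have "kL * (s - 1)\<^sup>2 \<le> (- G s) - (- G 1)"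
    by (rule primitive_ge_quadratic[where f = "\<lambda>x. - f1 F x"])
      (use dist in \<open>auto intro!: DERIV_minus G_deriv simp: power2_eq_square algebra_simps\<close>)
  moreover have "(- kU) * (s - 1)\<^sup>2 \<le> G s - G 1"
    by (rule primitive_ge_quadratic[where f = "f1 F"])
      (use dist in \<open>auto intro!: G_deriv simp: power2_eq_square algebra_simps\<close>)
  ultimately show ?thesis by (simp add: Hplus_def power2_commute)
qed

lemma Hminus_bounds:
  assumes "-2 \<le> s" "s \<le> 0"
  shows "kL * (1 + s)\<^sup>2 \<le> Hminus s \<and> Hminus s \<le> kU * (1 + s)\<^sup>2"
proof -
  have dist: "2 * kL * (1 + x)\<^sup>2 \<le> f1 F x * (1 + x) \<and> f1 F x * (1 + x) \<le> 2 * kU * (1 + x)\<^sup>2"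
    if "x \<in> {min (-1) s..max (-1) s}" for x
    using f1_times_distance[of x] that assms by auto
  have "kL * (s - -1)\<^sup>2 \<le> G s - G (-1)"
    by (rule primitive_ge_quadratic[where f = "f1 F"])
      (use dist in \<open>auto intro!: G_deriv simp: power2_eq_square algebra_simps\<close>)
  moreover have "(- kU) * (s - -1)\<^sup>2 \<le> (- G s) - (- G (-1))"
    by (rule primitive_ge_quadratic[where f = "\<lambda>x. - f1 F x"])
      (use dist in \<open>auto intro!: DERIV_minus G_deriv simp: power2_eq_square algebra_simps\<close>)
  ultimately show ?thesis by (simp add: Hminus_def add.commute)
qed

lemma Hplus_nonneg: "0 \<le> s \<Longrightarrow> s \<le> 2 \<Longrightarrow> 0 \<le> Hplus s"
  using Hplus_bounds[of s] kL_pos by (meson order_trans zero_le_power2 mult_nonneg_nonneg less_imp_le)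

lemma Hminus_nonneg: "-2 \<le> s \<Longrightarrow> s \<le> 0 \<Longrightarrow> 0 \<le> Hminus s"
  using Hminus_bounds[of s] kL_pos by (meson order_trans zero_le_power2 mult_nonneg_nonneg less_imp_le)

definition kap :: real where "kap = kU / cF"

lemma kap_pos: "kap > 0" using kU_pos cF by (simp add: kap_def)

lemma kU_mult_le_kap_F: "cF * d \<le> F s \<Longrightarrow> kU * d \<le> kap * F s"
  using cF kap_pos mult_left_mono[of "cF * d" "F s" kap] by (simp add: kap_def)

lemma Hplus_le_F: "0 \<le> s \<Longrightarrow> s \<le> 2 \<Longrightarrow> Hplus s \<le> kap * F s"
  using Hplus_bounds[of s] F_quadratic[of s] kU_mult_le_kap_F[of "(1 - s)\<^sup>2" s] by auto

lemma Hminus_le_F: "-2 \<le> s \<Longrightarrow> s \<le> 0 \<Longrightarrow> Hminus s \<le> kap * F s"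
  using Hminus_bounds[of s] F_quadratic[of s] kU_mult_le_kap_F[of "(1 + s)\<^sup>2" s] by auto

end

locale H1_profile = double_well +
  fixes v v' :: "real \<Rightarrow> real" and \<epsilon> A B :: real
  assumes H1: "H1_on A B v v'" and eps: "\<epsilon> > 0" and AB: "A \<le> B"
begin

abbreviation e :: "real \<Rightarrow> real" where "e \<equiv> energy_density F \<epsilon> v v'"
abbreviation energy :: "real \<Rightarrow> real \<Rightarrow> real" where "energy x y \<equiv> integral {x..y} e"
abbreviation flux :: "real \<Rightarrow> real" where "flux t \<equiv> f1 F (v t) * v' t"

lemma v'_set_integrable: "set_integrable lborel {A..B} v'"
  and v'_sq_set_integrable: "set_integrable lborel {A..B} (\<lambda>x. (v' x)\<^sup>2)"
  using H1 unfolding H1_on_def by blast+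

lemma v'_integrable: "v' integrable_on {A..B}"
  using set_borel_integral_eq_integral(1)[OF v'_set_integrable] .

lemma abs_v'_integrable: "(\<lambda>t. \<bar>v' t\<bar>) integrable_on {A..B}"
  using set_borel_integral_eq_integral(1)[OF set_integrable_abs[OF v'_set_integrable]] .

lemma v_primitive: "x \<in> {A..B} \<Longrightarrow> v x = v A + integral {A..x} v'"
proof -
  assume x: "x \<in> {A..B}"
  have "set_integrable lborel {A..x} v'" by (rule set_integrable_subset[OF v'_set_integrable]) (use x in auto)
  then have "(LBINT t=A..x. v' t) = integral {A..x} v'" using x by (intro interval_integral_eq_integral) auto
  moreover have "v x = v A + (LBINT t=A..x. v' t)" using H1 x unfolding H1_on_def by blast
  ultimately show ?thesis by linarith
qed

lemma v_cont: "continuous_on {A..B} v"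
proof -
  have "continuous_on {A..B} (\<lambda>t. v A + integral {A..t} v')"
    by (intro continuous_intros indefinite_integral_continuous_1[OF v'_integrable])
  then show ?thesis
  proof (rule continuous_on_eq)
    show "x \<in> {A..B} \<Longrightarrow> v A + integral {A..x} v' = v x" for x
      by (rule v_primitive[symmetric])
  qed
qed

lemma Fv_cont: "continuous_on {A..B} (\<lambda>t. F (v t))"
  using continuous_on_compose2[OF F_cont v_cont] by auto

lemma flux_set_integrable: "set_integrable lborel {A..B} flux"
proof -
  have f1v: "continuous_on {A..B} (\<lambda>t. f1 F (v t))"
    using continuous_on_compose2[OF f1_cont v_cont] by auto
  then have "bounded ((\<lambda>t. f1 F (v t)) ` {A..B})"
    by (intro compact_imp_bounded compact_continuous_image) auto
  then obtain M where "\<forall>t\<in>{A..B}. \<bar>f1 F (v t)\<bar> \<le> M"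
    unfolding bounded_iff by auto
  then have M: "\<And>t. t \<in> {A..B} \<Longrightarrow> \<bar>f1 F (v t)\<bar> \<le> M" by blast
  have "(\<lambda>x. indicator {A..B} x *\<^sub>R f1 F (v x)) \<in> borel_measurable lborel"
    using borel_measurable_continuous_on_indicator[OF _ f1v] by simp
  moreover have "(\<lambda>x. indicator {A..B} x *\<^sub>R v' x) \<in> borel_measurable lborel"
    using v'_set_integrable unfolding set_integrable_def by (rule borel_measurable_integrable)
  ultimately have "(\<lambda>x. (indicator {A..B} x *\<^sub>R f1 F (v x)) * (indicator {A..B} x *\<^sub>R v' x)) \<in> borel_measurable lborel"
    by (rule borel_measurable_times)
  moreover have "(\<lambda>x. (indicator {A..B} x *\<^sub>R f1 F (v x)) * (indicator {A..B} x *\<^sub>R v' x))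
      = (\<lambda>x. indicator {A..B} x *\<^sub>R flux x)"
    by (auto simp: indicator_def fun_eq_iff)
  ultimately have "set_borel_measurable lborel {A..B} flux"
    unfolding set_borel_measurable_def by simp
  then show ?thesis
  proof (rule set_integrable_bound[rotated])
    show "set_integrable lborel {A..B} (\<lambda>x. M * v' x)" using v'_set_integrable by auto
    show "AE x in lborel. x \<in> {A..B} \<longrightarrow> norm (flux x) \<le> norm (M * v' x)"
    proof (intro AE_I2 impI)
      fix x assume x: "x \<in> {A..B}"
      have "\<bar>f1 F (v x)\<bar> * \<bar>v' x\<bar> \<le> M * \<bar>v' x\<bar>" using M[OF x] by (intro mult_right_mono) auto
      moreover have "M \<ge> 0" using M[OF x] by linarith
      ultimately show "norm (flux x) \<le> norm (M * v' x)" by (simp add: abs_mult)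
    qed
  qed
qed

lemma e_set_integrable: "set_integrable lborel {A..B} e"
proof -
  have "set_integrable lborel {A..B} (\<lambda>x. \<epsilon> / 2 * (v' x)\<^sup>2)"
    using v'_sq_set_integrable by auto
  moreover have "set_integrable lborel {A..B} (\<lambda>x. F (v x) / \<epsilon>)"
    using eps by (intro borel_integrable_atLeastAtMost' continuous_intros Fv_cont) auto
  ultimately show ?thesis unfolding energy_density_def[abs_def] by (rule set_integral_add)
qed

lemma flux_integrable: "A \<le> x \<Longrightarrow> y \<le> B \<Longrightarrow> flux integrable_on {x..y}"
  by (rule integrable_on_subinterval[OF set_borel_integral_eq_integral(1)[OF flux_set_integrable]]) auto

lemma e_integrable: "A \<le> x \<Longrightarrow> y \<le> B \<Longrightarrow> e integrable_on {x..y}"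
  by (rule integrable_on_subinterval[OF set_borel_integral_eq_integral(1)[OF e_set_integrable]]) auto

lemma deficit_eq: "1/2 * (sqrt \<epsilon> * v' t - f1 F (v t) / sqrt \<epsilon>)\<^sup>2 = e t - flux t"
proof -
  obtain r where r: "r > 0" "\<epsilon> = r\<^sup>2" using eps by (intro that[of "sqrt \<epsilon>"]) auto
  show ?thesis
    using f1_sq[of "v t"] r unfolding energy_density_def by (simp add: power2_eq_square field_simps)
qed

lemma abs_flux_le_e: "\<bar>flux t\<bar> \<le> e t"
proof -
  have "0 \<le> 1/2 * (sqrt \<epsilon> * \<bar>v' t\<bar> - \<bar>f1 F (v t)\<bar> / sqrt \<epsilon>)\<^sup>2" by simp
  also have "\<dots> = e t - \<bar>flux t\<bar>"
  proof -
    obtain r where r: "r > 0" "\<epsilon> = r\<^sup>2" using eps by (intro that[of "sqrt \<epsilon>"]) auto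
    show ?thesis
      using f1_sq[of "v t"] r unfolding energy_density_def
      by (simp add: power2_eq_square field_simps abs_mult abs_mult_self_eq)
  qed
  finally show ?thesis by simp
qed

lemma energy_nonneg: "0 \<le> energy x y"
  using abs_flux_le_e by (cases "e integrable_on {x..y}")
    (auto intro: integral_nonneg order_trans[OF abs_ge_zero] simp: not_integrable_integral)

lemma energy_add: "A \<le> x \<Longrightarrow> x \<le> y \<Longrightarrow> y \<le> z \<Longrightarrow> z \<le> B \<Longrightarrow> energy x y + energy y z = energy x z"
  by (rule Henstock_Kurzweil_Integration.integral_combine) (auto intro: e_integrable)

lemma energy_mono:
  "A \<le> x \<Longrightarrow> x \<le> x' \<Longrightarrow> x' \<le> y' \<Longrightarrow> y' \<le> y \<Longrightarrow> y \<le> B \<Longrightarrow> energy x' y' \<le> energy x y"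
  using energy_add[of x x' y] energy_add[of x' y' y] energy_nonneg[of x x'] energy_nonneg[of y' y]
  by linarith

lemma energy_ge_potential:
  "A \<le> x \<Longrightarrow> x \<le> y \<Longrightarrow> y \<le> B \<Longrightarrow> integral {x..y} (\<lambda>t. F (v t) / \<epsilon>) \<le> energy x y"
  using eps
  by (intro integral_le e_integrable integrable_continuous_interval continuous_intros
      continuous_on_subset[OF Fv_cont]) (auto simp: energy_density_def)

lemma G_v_diff_eq_integral_flux:
  assumes "A \<le> x" "x \<le> y" "y \<le> B"
  shows "G (v y) - G (v x) = integral {x..y} flux"
proof (rule integral_chain_rule)
  show "v t = v x + integral {x..t} v'" if "t \<in> {x..y}" for t
  proof -
    have "integral {A..x} v' + integral {x..t} v' = integral {A..t} v'"
      using that assms integrable_on_subinterval[OF v'_integrable, of A t]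
      by (intro Henstock_Kurzweil_Integration.integral_combine) auto
    moreover have "v x = v A + integral {A..x} v'" "v t = v A + integral {A..t} v'"
      using that assms by (auto intro!: v_primitive)
    ultimately show ?thesis by linarith
  qed
qed (use assms in \<open>auto intro: integrable_on_subinterval[OF v'_integrable]
    integrable_on_subinterval[OF abs_v'_integrable] flux_integrable f1_cont G_deriv\<close>)

lemma G_v_oscillation_le_energy:
  assumes "A \<le> x" "x \<le> y" "y \<le> B"
  shows "\<bar>G (v y) - G (v x)\<bar> \<le> energy x y"
proof -
  have "norm (integral {x..y} flux) \<le> energy x y"
    using assms abs_flux_le_e by (intro integral_norm_bound_integral flux_integrable e_integrable) auto
  then show ?thesis using G_v_diff_eq_integral_flux[OF assms] by simp
qed

lemma LBINT_energy: "(LBINT t=A..B. e t) = energy A B"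
  using AB e_set_integrable by (intro interval_integral_eq_integral) auto

lemma LBINT_deficit:
  "(LBINT t=A..B. 1/2 * (sqrt \<epsilon> * v' t - f1 F (v t) / sqrt \<epsilon>)\<^sup>2) = energy A B - (G (v B) - G (v A))"
proof -
  have "(LBINT t=A..B. 1/2 * (sqrt \<epsilon> * v' t - f1 F (v t) / sqrt \<epsilon>)\<^sup>2) = integral {A..B} (\<lambda>t. e t - flux t)"
    unfolding deficit_eq using AB set_integral_diff(1)[OF e_set_integrable flux_set_integrable]
    by (intro interval_integral_eq_integral) auto
  also have "\<dots> = energy A B - integral {A..B} flux"
    using AB by (intro Henstock_Kurzweil_Integration.integral_diff e_integrable flux_integrable) auto
  finally show ?thesis using G_v_diff_eq_integral_flux[of A B] AB by simp
qed

lemma energy_ge_half_on_block: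
  assumes "A \<le> x" "y \<le> B" and length: "y - x = kap * \<epsilon>"
    and bound: "\<And>t. t \<in> {x..y} \<Longrightarrow> c \<le> energy x y + kap * F (v t)"
  shows "c \<le> 2 * energy x y"
proof -
  have "0 < kap * \<epsilon>" using kap_pos eps by simp
  then have "x \<le> y" using length by linarith
  define K where "K = (c - energy x y) / (kap * \<epsilon>)"
  have "integral {x..y} (\<lambda>t. K) = c - energy x y"
    using \<open>x \<le> y\<close> length eps kap_pos by (simp add: K_def)
  moreover have "integral {x..y} (\<lambda>t. K) \<le> integral {x..y} (\<lambda>t. F (v t) / \<epsilon>)"
  proof (rule integral_le)
    show "(\<lambda>t. F (v t) / \<epsilon>) integrable_on {x..y}"
      using assms \<open>x \<le> y\<close> eps by (intro integrable_continuous_interval continuous_intros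
          continuous_on_subset[OF Fv_cont]) auto
    show "K \<le> F (v t) / \<epsilon>" if "t \<in> {x..y}" for t
    proof -
      have "(c - energy x y) / (kap * \<epsilon>) \<le> kap * F (v t) / (kap * \<epsilon>)"
        using bound[OF that] \<open>0 < kap * \<epsilon>\<close> by (intro divide_right_mono) auto
      then show ?thesis using kap_pos by (simp add: K_def)
    qed
  qed auto
  moreover have "\<dots> \<le> energy x y" using assms \<open>x \<le> y\<close> by (intro energy_ge_potential) auto
  ultimately show ?thesis by linarith
qed

lemma energy_sum_right:
  assumes "0 \<le> h" "A \<le> p" "p + real n * h \<le> B"
  shows "(\<Sum>j<n. energy (p + real j * h) (p + real (Suc j) * h)) = energy p (p + real n * h)"
  using assms(3)
proof (induction n)
  case (Suc n)
  have "p + real n * h \<le> p + real (Suc n) * h" using assms(1) by (simp add: distrib_right)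
  with Suc assms show ?case by (simp add: energy_add)
qed simp

lemma energy_sum_left:
  assumes "0 \<le> h" "A \<le> q - real n * h" "q \<le> B"
  shows "(\<Sum>j<n. energy (q - real (Suc j) * h) (q - real j * h)) = energy (q - real n * h) q"
  using assms(2)
proof (induction n)
  case (Suc n)
  have "q - real (Suc n) * h \<le> q - real n * h" using assms(1) by (simp add: distrib_right)
  with Suc assms energy_add[of "q - real (Suc n) * h" "q - real n * h" q] show ?case by simp
qed simp

lemma block_estimates_right:
  assumes "A \<le> x" "y \<le> B" "y - x = kap * \<epsilon>" and confined: "v ` {x..y} \<subseteq> {0..2}"
  shows "Hplus (v x) - Hplus (v y) \<le> energy x y" and "Hplus (v y) / 2 \<le> energy x y"
proof -
  have "0 < kap * \<epsilon>" using kap_pos eps by simp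
  then have "x \<le> y" using assms(3) by linarith
  then show "Hplus (v x) - Hplus (v y) \<le> energy x y"
    using G_v_oscillation_le_energy[of x y] assms by (simp add: Hplus_def)
  have "Hplus (v y) \<le> 2 * energy x y"
  proof (rule energy_ge_half_on_block[OF assms(1-3)])
    fix t assume t: "t \<in> {x..y}"
    have "v t \<in> {0..2}" using confined t by blast
    then have "Hplus (v t) \<le> kap * F (v t)" by (intro Hplus_le_F) auto
    moreover have "Hplus (v y) - Hplus (v t) \<le> energy t y"
      using G_v_oscillation_le_energy[of t y] t assms by (simp add: Hplus_def)
    moreover have "energy t y \<le> energy x y" using t assms by (intro energy_mono) auto
    ultimately show "Hplus (v y) \<le> energy x y + kap * F (v t)" by linarith
  qed
  then show "Hplus (v y) / 2 \<le> energy x y" by simp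
qed

lemma block_estimates_left:
  assumes "A \<le> x" "y \<le> B" "y - x = kap * \<epsilon>" and confined: "v ` {x..y} \<subseteq> {-2..0}"
  shows "Hminus (v y) - Hminus (v x) \<le> energy x y" and "Hminus (v x) / 2 \<le> energy x y"
proof -
  have "0 < kap * \<epsilon>" using kap_pos eps by simp
  then have "x \<le> y" using assms(3) by linarith
  then show "Hminus (v y) - Hminus (v x) \<le> energy x y"
    using G_v_oscillation_le_energy[of x y] assms by (simp add: Hminus_def)
  have "Hminus (v x) \<le> 2 * energy x y"
  proof (rule energy_ge_half_on_block[OF assms(1-3)])
    fix t assume t: "t \<in> {x..y}"
    have "v t \<in> {-2..0}" using confined t by blast
    then have "Hminus (v t) \<le> kap * F (v t)" by (intro Hminus_le_F) auto
    moreover have "Hminus (v x) - Hminus (v t) \<le> energy x t"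
      using G_v_oscillation_le_energy[of x t] t assms by (simp add: Hminus_def)
    moreover have "energy x t \<le> energy x y" using t assms by (intro energy_mono) auto
    ultimately show "Hminus (v x) \<le> energy x y + kap * F (v t)" by linarith
  qed
  then show "Hminus (v x) / 2 \<le> energy x y" by simp
qed

lemma energy_decay_right:
  fixes N :: nat
  assumes "A \<le> b" "b + real N * (kap * \<epsilon>) \<le> B"
    and confined: "v ` {b..b + real N * (kap * \<epsilon>)} \<subseteq> {0..2}"
  shows "(1 - 5/4 * (2/3)^N) * Hplus (v b) + Hplus (v (b + real N * (kap * \<epsilon>))) / 4
    \<le> energy b (b + real N * (kap * \<epsilon>))"
proof -
  define h where "h = kap * \<epsilon>"
  have "h > 0" using kap_pos eps by (simp add: h_def)
  define x where "x j = b + real j * h" for j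
  have "(1 - 5/4 * (2/3)^N) * Hplus (v (x 0)) + Hplus (v (x N)) / 4 \<le> (\<Sum>j<N. energy (x j) (x (Suc j)))"
  proof (rule decay_recurrence)
    fix j assume "j < N"
    then have "real (Suc j) * h \<le> real N * h" using \<open>h > 0\<close> by (intro mult_right_mono) auto
    then have "b \<le> x j" "x (Suc j) \<le> b + real N * h" using \<open>h > 0\<close> by (auto simp: x_def)
    then have "A \<le> x j" "x (Suc j) \<le> B" "x (Suc j) - x j = kap * \<epsilon>" "v ` {x j..x (Suc j)} \<subseteq> {0..2}"
      using assms by (auto simp: x_def h_def algebra_simps)
    from block_estimates_right[OF this]
    show "Hplus (v (x j)) - Hplus (v (x (Suc j))) \<le> energy (x j) (x (Suc j))"
      and "Hplus (v (x (Suc j))) / 2 \<le> energy (x j) (x (Suc j))" .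
  qed
  then show ?thesis
    using energy_sum_right[of h b N] assms \<open>h > 0\<close> by (simp add: x_def h_def)
qed

lemma energy_decay_left:
  fixes N :: nat
  assumes "A \<le> a - real N * (kap * \<epsilon>)" "a \<le> B"
    and confined: "v ` {a - real N * (kap * \<epsilon>)..a} \<subseteq> {-2..0}"
  shows "(1 - 5/4 * (2/3)^N) * Hminus (v a) + Hminus (v (a - real N * (kap * \<epsilon>))) / 4
    \<le> energy (a - real N * (kap * \<epsilon>)) a"
proof -
  define h where "h = kap * \<epsilon>"
  have "h > 0" using kap_pos eps by (simp add: h_def)
  define x where "x j = a - real j * h" for j
  have "(1 - 5/4 * (2/3)^N) * Hminus (v (x 0)) + Hminus (v (x N)) / 4 \<le> (\<Sum>j<N. energy (x (Suc j)) (x j))"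
  proof (rule decay_recurrence)
    fix j assume "j < N"
    then have "real (Suc j) * h \<le> real N * h" using \<open>h > 0\<close> by (intro mult_right_mono) auto
    then have "a - real N * h \<le> x (Suc j)" "x j \<le> a" using \<open>h > 0\<close> by (auto simp: x_def)
    then have "A \<le> x (Suc j)" "x j \<le> B" "x j - x (Suc j) = kap * \<epsilon>" "v ` {x (Suc j)..x j} \<subseteq> {-2..0}"
      using assms by (auto simp: x_def h_def algebra_simps)
    from block_estimates_left[OF this]
    show "Hminus (v (x j)) - Hminus (v (x (Suc j))) \<le> energy (x (Suc j)) (x j)"
      and "Hminus (v (x (Suc j))) / 2 \<le> energy (x (Suc j)) (x j)" .
  qed
  then show ?thesis
    using energy_sum_left[of h a N] assms \<open>h > 0\<close> by (simp add: x_def h_def)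
qed

lemma energy_ge_escape_right:
  assumes "A \<le> x" "x \<le> y" "y \<le> B" "v x \<in> {0..2}" "\<not> v ` {x..y} \<subseteq> {0..2}"
  shows "kL - Hplus (v x) \<le> energy x y"
proof -
  from assms(5) obtain z where "z \<in> {x..y}" "v z \<notin> {0..2}" by blast
  then have z: "x \<le> z" "z \<le> y" "v z \<notin> {0..2}" by auto
  have cont: "continuous_on {x..z} v" using z assms by (intro continuous_on_subset[OF v_cont]) auto
  obtain t where t: "x \<le> t" "t \<le> z" "v t = 0 \<or> v t = 2"
  proof (cases "v z < 0")
    case True
    then show ?thesis using IVT2'[of v z 0 x, OF _ _ _ cont] assms(4) z that by auto
  next
    case False
    then show ?thesis using IVT'[of v x 2 z, OF _ _ _ cont] assms(4) z that by auto
  qed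
  then have "kL \<le> Hplus (v t)" using Hplus_bounds[of "v t"] by auto
  moreover have "Hplus (v t) - Hplus (v x) \<le> energy x t"
    using G_v_oscillation_le_energy[of x t] t z assms by (simp add: Hplus_def)
  moreover have "energy x t \<le> energy x y" using t z assms by (intro energy_mono) auto
  ultimately show ?thesis by linarith
qed

lemma energy_ge_escape_left:
  assumes "A \<le> x" "x \<le> y" "y \<le> B" "v y \<in> {-2..0}" "\<not> v ` {x..y} \<subseteq> {-2..0}"
  shows "kL - Hminus (v y) \<le> energy x y"
proof -
  from assms(5) obtain z where "z \<in> {x..y}" "v z \<notin> {-2..0}" by blast
  then have z: "x \<le> z" "z \<le> y" "v z \<notin> {-2..0}" by auto
  have cont: "continuous_on {z..y} v" using z assms by (intro continuous_on_subset[OF v_cont]) auto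
  obtain t where t: "z \<le> t" "t \<le> y" "v t = 0 \<or> v t = -2"
  proof (cases "v z > 0")
    case True
    then show ?thesis using IVT2'[of v y 0 z, OF _ _ _ cont] assms(4) z that by auto
  next
    case False
    then show ?thesis using IVT'[of v z "-2" y, OF _ _ _ cont] assms(4) z that by auto
  qed
  then have "kL \<le> Hminus (v t)" using Hminus_bounds[of "v t"] by auto
  moreover have "Hminus (v t) - Hminus (v y) \<le> energy t y"
    using G_v_oscillation_le_energy[of t y] t z assms by (simp add: Hminus_def)
  moreover have "energy t y \<le> energy x y" using t z assms by (intro energy_mono) auto
  ultimately show ?thesis by linarith
qed

lemma energy_ge_transition:
  "A \<le> a \<Longrightarrow> a \<le> b \<Longrightarrow> b \<le> B \<Longrightarrow> c0 F - Hminus (v a) - Hplus (v b) \<le> energy a b"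
  using G_v_oscillation_le_energy[of a b] by (simp add: c0_eq_G Hplus_def Hminus_def)

lemma energy_ge_if_not_confined:
  assumes "A \<le> s" "s \<le> a" "a \<le> b" "b \<le> t" "t \<le> B" "v a \<in> {-2..0}" "v b \<in> {0..2}"
    and "\<not> (v ` {s..a} \<subseteq> {-2..0} \<and> v ` {b..t} \<subseteq> {0..2})"
  shows "c0 F + kL - 2 * (Hminus (v a) + Hplus (v b)) \<le> energy A B"
proof -
  have "energy s t = energy s a + energy a b + energy b t"
    using assms energy_add[of s a b] energy_add[of s b t] by simp
  moreover have "energy s t \<le> energy A B" using assms by (intro energy_mono) auto
  moreover have "0 \<le> Hminus (v a)" "0 \<le> Hplus (v b)"
    using assms(6,7) Hminus_nonneg Hplus_nonneg by auto
  ultimately show ?thesis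
    using assms energy_ge_transition[of a b] energy_nonneg[of s a] energy_nonneg[of b t]
      energy_ge_escape_left[of s a] energy_ge_escape_right[of b t] by force
qed

lemma energy_bounds_if_confined:
  fixes N :: nat
  assumes s: "s = a - real N * (kap * \<epsilon>)" and t: "t = b + real N * (kap * \<epsilon>)"
    and "A \<le> s" "a \<le> b" "t \<le> B" and confined: "v ` {s..a} \<subseteq> {-2..0}" "v ` {b..t} \<subseteq> {0..2}"
  defines "T \<equiv> 5/4 * (2/3::real)^N"
  shows "c0 F - T * (Hminus (v a) + Hplus (v b)) \<le> energy A B"
    and "energy A B - (G (v B) - G (v A)) \<le> 5 * (energy A B - c0 F) + 4 * T * (Hminus (v a) + Hplus (v b))"
proof -
  have "0 \<le> real N * (kap * \<epsilon>)" using kap_pos eps by simp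
  then have pos: "A \<le> s" "s \<le> a" "a \<le> b" "b \<le> t" "t \<le> B" using assms by auto
  have "s \<in> {s..a}" "t \<in> {b..t}" using pos by auto
  then have "v s \<in> {-2..0}" "v t \<in> {0..2}" using confined by blast+
  then have ends_wells: "0 \<le> Hminus (v s)" "0 \<le> Hplus (v t)"
    using Hminus_nonneg Hplus_nonneg by auto
  have left: "Hminus (v a) - T * Hminus (v a) + Hminus (v s) / 4 \<le> energy s a"
    using energy_decay_left[of a N] pos confined by (simp add: s T_def left_diff_distrib)
  have right: "Hplus (v b) - T * Hplus (v b) + Hplus (v t) / 4 \<le> energy b t"
    using energy_decay_right[of b N] pos confined by (simp add: t T_def left_diff_distrib)
  have split: "energy A B = energy A s + energy s a + energy a b + energy b t + energy t B"
    using pos energy_add[of A s a] energy_add[of A a b] energy_add[of A b t] energy_add[of A t B] by simp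
  have mid: "c0 F - Hminus (v a) - Hplus (v b) \<le> energy a b"
    using pos by (intro energy_ge_transition) auto
  have ends: "0 \<le> energy A s" "0 \<le> energy t B" by (rule energy_nonneg)+
  show "c0 F - T * (Hminus (v a) + Hplus (v b)) \<le> energy A B"
    unfolding distrib_left using split left right mid ends ends_wells by linarith
  \<comment> \<open>Outside [s, t] the deficit is controlled by the calibration, inside by the decay estimates.\<close>
  have "G (v A) - G (v s) \<le> energy A s" "G (v t) - G (v B) \<le> energy t B"
    using pos G_v_oscillation_le_energy[of A s] G_v_oscillation_le_energy[of t B] by auto
  moreover have "G (v t) - G (v s) = c0 F - Hplus (v t) - Hminus (v s)"
    by (simp add: c0_eq_G Hplus_def Hminus_def)
  ultimately have "energy A B - (G (v B) - G (v A))
      \<le> energy A B + energy A s + energy t B - c0 F + Hplus (v t) + Hminus (v s)"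
    by linarith
  then show "energy A B - (G (v B) - G (v A)) \<le> 5 * (energy A B - c0 F) + 4 * T * (Hminus (v a) + Hplus (v b))"
    unfolding distrib_left mult.assoc using split left right mid ends by argo
qed

end

context double_well
begin

definition tol :: real where "tol = min (kL / (8 * kU)) (1 / (4 * kU))"
definition rate :: "real \<Rightarrow> real" where "rate \<rho> = ln (3/2) * \<rho> / (4 * kap)"

lemma tol_bounds: "0 < tol" "kU * tol \<le> kL / 8" "kU * tol \<le> 1/4" "tol \<le> 1"
proof -
  show "0 < tol" using kL_pos kU_pos by (simp add: tol_def)
  show "kU * tol \<le> kL / 8" "kU * tol \<le> 1/4"
    using kU_pos mult_left_mono[of tol "kL / (8 * kU)" kU] mult_left_mono[of tol "1 / (4 * kU)" kU]
    by (auto simp: tol_def)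
  then have "kU * tol \<le> kU * 1" using kL_le_kU kL_pos by linarith
  then show "tol \<le> 1" using kU_pos by (simp add: mult_le_cancel_left_pos)
qed

lemma near_plus_well: "(s - 1)\<^sup>2 < tol \<Longrightarrow> s \<in> {0..2} \<and> 0 \<le> Hplus s \<and> Hplus s \<le> kU * tol"
proof -
  assume near: "(s - 1)\<^sup>2 < tol"
  then have "\<bar>s - 1\<bar> \<le> 1" using tol_bounds(4) abs_square_le_1[of "s - 1"] by linarith
  moreover have "kU * (1 - s)\<^sup>2 \<le> kU * tol"
    using near kU_pos by (simp add: power2_commute)
  moreover from \<open>\<bar>s - 1\<bar> \<le> 1\<close> have s: "0 \<le> s" "s \<le> 2" by auto
  ultimately show ?thesis using Hplus_bounds[OF s] Hplus_nonneg[OF s] by auto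
qed

lemma near_minus_well: "(s + 1)\<^sup>2 < tol \<Longrightarrow> s \<in> {-2..0} \<and> 0 \<le> Hminus s \<and> Hminus s \<le> kU * tol"
proof -
  assume near: "(s + 1)\<^sup>2 < tol"
  then have "\<bar>s + 1\<bar> \<le> 1" using tol_bounds(4) abs_square_le_1[of "s + 1"] by linarith
  moreover have "kU * (1 + s)\<^sup>2 \<le> kU * tol"
    using near kU_pos by (simp add: add.commute)
  moreover from \<open>\<bar>s + 1\<bar> \<le> 1\<close> have s: "-2 \<le> s" "s \<le> 0" by auto
  ultimately show ?thesis using Hminus_bounds[OF s] Hminus_nonneg[OF s] by auto
qed

lemma exists_transition_layout:
  fixes v :: "real \<Rightarrow> real"
  assumes rho: "\<rho> > 0" and eps: "\<epsilon> > 0" and v: "continuous_on {-\<rho>..\<rho>} v"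
    and close: "(LBINT y=-\<rho>..\<rho>. \<bar>y\<bar> * (v y - sgn y)\<^sup>2) \<le> \<rho>\<^sup>2 * tol / 16"
  obtains a b :: real and N :: nat
  where "-\<rho> \<le> a - real N * (kap * \<epsilon>)" "a \<le> b" "b + real N * (kap * \<epsilon>) \<le> \<rho>"
    and "v a \<in> {-2..0}" "v b \<in> {0..2}" "Hminus (v a) + Hplus (v b) \<le> kL / 4"
    and "5/4 * (2/3)^N * (Hminus (v a) + Hplus (v b)) \<le> exp (- rate \<rho> / \<epsilon>)"
proof -
  have "\<rho>\<^sup>2 * tol / 16 < \<rho>\<^sup>2 * tol / 8" using rho tol_bounds(1) by simp
  with close near_signs_if_weighted_distance_small[OF v rho, of tol]
  obtain a b where a: "-3*\<rho>/4 \<le> a" "a \<le> -\<rho>/2" "(v a + 1)\<^sup>2 < tol"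
    and b: "\<rho>/2 \<le> b" "b \<le> 3*\<rho>/4" "(v b - 1)\<^sup>2 < tol" by fastforce
  note va = near_minus_well[OF a(3)] and vb = near_plus_well[OF b(3)]
  define h where "h = kap * \<epsilon>"
  have "h > 0" using kap_pos eps by (simp add: h_def)
  \<comment> \<open>N blocks of length h fit into a quarter of the interval, so (2/3)^N is exponentially small in 1/\<epsilon>.\<close>
  obtain N :: nat where N: "real N \<le> \<rho> / (4 * h)" "(2/3::real)^N \<le> 3/2 * exp (- rate \<rho> / \<epsilon>)"
    using exists_steps_two_thirds_pow_le_exp[of "\<rho> / (4 * h)"] rho \<open>h > 0\<close>
    by (auto simp: rate_def h_def field_simps)
  have "real N * h \<le> \<rho> / 4" "0 \<le> real N * h" using N \<open>h > 0\<close> by (simp_all add: field_simps)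
  then have layout: "-\<rho> \<le> a - real N * h" "a \<le> b" "b + real N * h \<le> \<rho>" using a b by auto
  have wells: "Hminus (v a) + Hplus (v b) \<le> kL / 4" using va vb tol_bounds(2) by linarith
  have "5/4 * (2/3)^N * (Hminus (v a) + Hplus (v b)) \<le> (15/8 * exp (- rate \<rho> / \<epsilon>)) * (1/2)"
    by (rule mult_mono) (use N va vb tol_bounds(3) in auto)
  then have tail: "5/4 * (2/3)^N * (Hminus (v a) + Hplus (v b)) \<le> exp (- rate \<rho> / \<epsilon>)"
    using exp_gt_zero[of "- rate \<rho> / \<epsilon>"] by linarith
  show ?thesis
    by (rule that[of a N b]) (use layout va vb wells tail in \<open>simp_all add: h_def\<close>)
qed

lemma transition_energy_estimates:
  fixes \<rho> \<epsilon> :: real and v v' :: "real \<Rightarrow> real"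
  assumes rho: "\<rho> > 0" and eps: "\<epsilon> > 0" and H1: "H1_on (-\<rho>) \<rho> v v'"
    and close: "(LBINT y=-\<rho>..\<rho>. \<bar>y\<bar> * (v y - sgn y)\<^sup>2) \<le> \<rho>\<^sup>2 * tol / 16"
  shows "c0 F - 10 * exp (- rate \<rho> / \<epsilon>) \<le> (LBINT y=-\<rho>..\<rho>. energy_density F \<epsilon> v v' y)"
    and "(LBINT y=-\<rho>..\<rho>. energy_density F \<epsilon> v v' y) - c0 F \<le> kL / 4 \<Longrightarrow> \<rho> \<le> \<rho>' \<Longrightarrow>
      H1_on (-\<rho>') \<rho>' v v' \<Longrightarrow>
      (LBINT y=-\<rho>'..\<rho>'. 1/2 * (sqrt \<epsilon> * v' y - f1 F (v y) / sqrt \<epsilon>)\<^sup>2)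
        \<le> 10 * ((LBINT y=-\<rho>'..\<rho>'. energy_density F \<epsilon> v v' y) - c0 F) + 10 * exp (- rate \<rho> / \<epsilon>)"
proof -
  interpret P: H1_profile F cF CF v v' \<epsilon> "-\<rho>" \<rho>
    using H1 eps rho by unfold_locales auto
  obtain a b N where layout: "-\<rho> \<le> a - real N * (kap * \<epsilon>)" "a \<le> b" "b + real N * (kap * \<epsilon>) \<le> \<rho>"
    and va: "v a \<in> {-2..0}" and vb: "v b \<in> {0..2}" and wells: "Hminus (v a) + Hplus (v b) \<le> kL / 4"
    and tail: "5/4 * (2/3)^N * (Hminus (v a) + Hplus (v b)) \<le> exp (- rate \<rho> / \<epsilon>)"
    using exists_transition_layout[OF rho eps P.v_cont close] by blast
  define s t where "s = a - real N * (kap * \<epsilon>)" and "t = b + real N * (kap * \<epsilon>)"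
  define ex where "ex = exp (- rate \<rho> / \<epsilon>)"
  have "ex > 0" by (simp add: ex_def)
  have pos: "-\<rho> \<le> s" "s \<le> a" "a \<le> b" "b \<le> t" "t \<le> \<rho>"
    using layout kap_pos eps by (auto simp: s_def t_def)
  let ?confined = "v ` {s..a} \<subseteq> {-2..0} \<and> v ` {b..t} \<subseteq> {0..2}"
  have escape: "c0 F + kL / 2 \<le> P.energy (-\<rho>) \<rho>" if "\<not> ?confined"
    using P.energy_ge_if_not_confined[OF pos va vb that] wells by argo
  have "c0 F - ex \<le> P.energy (-\<rho>) \<rho>"
  proof (cases ?confined)
    case True
    then have "c0 F - 5/4 * (2/3)^N * (Hminus (v a) + Hplus (v b)) \<le> P.energy (-\<rho>) \<rho>"
      using pos by (intro P.energy_bounds_if_confined(1)[OF s_def t_def]) auto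
    with tail show ?thesis by (simp add: ex_def)
  next
    case False
    with escape kL_pos \<open>ex > 0\<close> show ?thesis by fastforce
  qed
  then show "c0 F - 10 * exp (- rate \<rho> / \<epsilon>) \<le> (LBINT y=-\<rho>..\<rho>. energy_density F \<epsilon> v v' y)"
    unfolding P.LBINT_energy ex_def[symmetric] using \<open>ex > 0\<close> by linarith
  assume excess: "(LBINT y=-\<rho>..\<rho>. energy_density F \<epsilon> v v' y) - c0 F \<le> kL / 4"
    and "\<rho> \<le> \<rho>'" "H1_on (-\<rho>') \<rho>' v v'"
  then interpret Q: H1_profile F cF CF v v' \<epsilon> "-\<rho>'" \<rho>'
    using eps rho by unfold_locales auto
  have ?confined using escape excess kL_pos unfolding P.LBINT_energy by force
  then have "c0 F - 5/4 * (2/3)^N * (Hminus (v a) + Hplus (v b)) \<le> Q.energy (-\<rho>') \<rho>'"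
    and "Q.energy (-\<rho>') \<rho>' - (G (v \<rho>') - G (v (-\<rho>')))
      \<le> 5 * (Q.energy (-\<rho>') \<rho>' - c0 F) + 4 * (5/4 * (2/3)^N) * (Hminus (v a) + Hplus (v b))"
    using pos \<open>\<rho> \<le> \<rho>'\<close> by (intro Q.energy_bounds_if_confined[OF s_def t_def]; force)+
  with tail show "(LBINT y=-\<rho>'..\<rho>'. 1/2 * (sqrt \<epsilon> * v' y - f1 F (v y) / sqrt \<epsilon>)\<^sup>2)
        \<le> 10 * ((LBINT y=-\<rho>'..\<rho>'. energy_density F \<epsilon> v v' y) - c0 F) + 10 * exp (- rate \<rho> / \<epsilon>)"
    unfolding Q.LBINT_deficit Q.LBINT_energy ex_def[symmetric] using \<open>ex > 0\<close>
    by (simp only: mult.assoc) argo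
qed

end

theorem lemma5p3:
  fixes F :: "real \<Rightarrow> real" and \<rho> :: real
  assumes smooth: "smooth_fun F"
    and Fpos: "\<And>x. \<bar>x\<bar> \<noteq> 1 \<Longrightarrow> F x > 0"
    and Fquad: "\<exists>cF CF. cF > 0 \<and> CF > 0 \<and>
        (\<forall>x. \<bar>x\<bar> \<le> 2 \<longrightarrow> cF * (1 - \<bar>x\<bar>)\<^sup>2 \<le> F x \<and> F x \<le> CF * (1 - \<bar>x\<bar>)\<^sup>2)"
    and rho: "\<rho> > 0"
  shows "\<exists>c6 c7 C c. c6 > 0 \<and> c7 > 0 \<and> C > 0 \<and> c > 0 \<and>
    (\<forall>\<epsilon> v v'. 0 < \<epsilon> \<and> \<epsilon> \<le> 1 \<and> H1_on (-\<rho>) \<rho> v v' \<and>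
       (LBINT y=-\<rho>..\<rho>. \<bar>y\<bar> * (v y - sgn y)\<^sup>2) \<le> c6 \<longrightarrow>
       (LBINT y=-\<rho>..\<rho>. energy_density F \<epsilon> v v' y) \<ge> c0 F - C * exp (- c / \<epsilon>) \<and>
       ((LBINT y=-\<rho>..\<rho>. energy_density F \<epsilon> v v' y) - c0 F \<le> c7 \<longrightarrow>
         (\<forall>\<rho>'. \<rho>' \<ge> \<rho> \<and> H1_on (-\<rho>') \<rho>' v v' \<longrightarrow>
            (LBINT y=-\<rho>'..\<rho>'. 1/2 * (sqrt \<epsilon> * v' y - f1 F (v y) / sqrt \<epsilon>)\<^sup>2)
              \<le> C * ((LBINT y=-\<rho>'..\<rho>'. energy_density F \<epsilon> v v' y) - c0 F)
                 + C * exp (- c / \<epsilon>))))"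
proof -
  obtain cF CF where "cF > 0"
    and quadratic: "\<And>x. \<bar>x\<bar> \<le> 2 \<Longrightarrow> cF * (1 - \<bar>x\<bar>)\<^sup>2 \<le> F x \<and> F x \<le> CF * (1 - \<bar>x\<bar>)\<^sup>2"
    using Fquad by blast
  have "F differentiable (at x)" for x
    using smooth unfolding smooth_fun_def by (metis funpow_0)
  then have "continuous_on UNIV F"
    by (meson continuous_at_imp_continuous_on differentiable_imp_continuous_within)
  then interpret double_well F cF CF
    using Fpos \<open>cF > 0\<close> quadratic by unfold_locales auto
  have "\<rho>\<^sup>2 * tol / 16 > 0" "kL / 4 > 0" "rate \<rho> > 0"
    using rho tol_bounds(1) kL_pos kap_pos by (auto simp: rate_def)
  with transition_energy_estimates[OF rho] show ?thesis
    by (intro exI[of _ "\<rho>\<^sup>2 * tol / 16"] exI[of _ "kL / 4"] exI[of _ 10] exI[of _ "rate \<rho>"]) auto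
qed

end
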